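(* Let $M$ be a $\lambda$-term and $\vec x$ a list of $n$ distinct variables with $FV(M)\subseteq\vec x$. If $M$ is head-normalizable, then $\llbracket M\rrbracket_{\vec x}$ is not the zero distributor, i.e. $\llbracket M\rrbracket_{\vec x}(\Delta,a)\neq\emptyset$ for some $\Delta\in(SD)^n$, $a\in D$.
   Context: A $\lambda$-term is in head-normal form if it has the shape $\lambda y_1\dots\lambda y_m.\,y\,Q_1\cdots Q_p$; it is head-normalizable if it $\beta$-reduces to a head-normal form. $[n]=\{1,\dots,n\}$. Fix a class $\mathcal C$ of functions between finite ordinals equal to one of: all bijections, all injections, all surjections, all functions. For a small category $X$, $SX$ has finite lists of objects of $X$ as objects and morphisms $\langle x_1,\dots,x_n\rangle\to\langle y_1,\dots,y_m\rangle$ the tuples $\langle\alpha,f_1,\dots,f_m\rangle$ with $\alpha:[m]\to[n]$ in $\mathcal C$, $f_i:x_{\alpha(i)}\to y_i$; composite of $\langle\alpha,\vec f\rangle$ then $\langle\beta,\vec g\rangle$ is $\langle\alpha\circ\beta,(g_i\circ f_{\beta(i)})_i\rangle$; tensor $\oplus$ = concatenation, unit $\langle\rangle$. Fix a small category $A$. $D=D_A$ is the colimit of $D_0=A$, $D_{k+1}=(SD_k)^{o}\times D_k\sqcup A$ along canonical inclusions: objects $a::=o\mid\vec a\Rightarrow a$ ($o\in\mathrm{Ob}(A)$); morphisms are those of $A$ and $\langle\alpha,\vec f\rangle\Rightarrow f:(\vec a\Rightarrow a)\to(\vec a'\Rightarrow a')$ for $\langle\alpha,\vec f\rangle:\vec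 a'\to\vec a$ in $SD$, $f:a\to a'$. $SD=S(D_A)$. Contexts are objects of $(SD)^n$; $\otimes$ is componentwise concatenation; $\Delta\oplus\langle\vec a\rangle$ appends a component. Denotation $\llbracket M\rrbracket_{\vec x}:((SD)^n)^{o}\times D\to\mathrm{Set}$ for $\vec x=\langle x_1..x_n\rangle\supseteq FV(M)$ (functorial action from hom-functors and coends): $\llbracket x_i\rrbracket_{\vec x}(\Delta,a)=(SD)^n(\Delta,\langle\langle\rangle,\dots,\langle a\rangle,\dots,\langle\rangle\rangle)$ ($\langle a\rangle$ at position $i$); $\llbracket\lambda y.P\rrbracket_{\vec x}(\Delta,a)=\llbracket P\rrbracket_{\vec x\oplus\langle y\rangle}(\Delta\oplus\langle\vec a'\rangle,a')$ if $a=\vec a'\Rightarrow a'$, $\emptyset$ if $a$ atomic; $\llbracket PQ\rrbracket_{\vec x}(\Delta,a)=\int^{\vec a=\langle a_1..a_k\rangle\in SD}\int^{\Gamma_0..\Gamma_k\in(SD)^n}\llbracket P\rrbracket_{\vec x}(\Gamma_0,\vec a\Rightarrow a)\times\prod_{i=1}^k\llbracket Q\rrbracket_{\vec x}(\Gamma_i,a_i)\times(SD)^n(\Delta,\bigotimes_{i=0}^k\Gamma_i)$. *)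

theory Defs
  imports Main
begin

section \<open>Untyped lambda-terms (de Bruijn) and head normalization\<close>

datatype dB = Var nat | App dB dB | Abs dB

fun db_lift :: "dB \<Rightarrow> nat \<Rightarrow> dB" where
  "db_lift (Var i) k = (if i < k then Var i else Var (Suc i))"
| "db_lift (App s t) k = App (db_lift s k) (db_lift t k)"
| "db_lift (Abs s) k = Abs (db_lift s (Suc k))"

fun db_subst :: "dB \<Rightarrow> dB \<Rightarrow> nat \<Rightarrow> dB" where
  "db_subst (Var i) s k = (if k < i then Var (i - 1) else if i = k then s else Var i)"
| "db_subst (App t u) s k = App (db_subst t s k) (db_subst u s k)"
| "db_subst (Abs t) s k = Abs (db_subst t (db_lift s 0) (Suc k))"

inductive beta :: "dB \<Rightarrow> dB \<Rightarrow> bool" where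
  beta_redex: "beta (App (Abs s) t) (db_subst s t 0)"
| beta_appL: "beta s t \<Longrightarrow> beta (App s u) (App t u)"
| beta_appR: "beta s t \<Longrightarrow> beta (App u s) (App u t)"
| beta_abs: "beta s t \<Longrightarrow> beta (Abs s) (Abs t)"

definition is_hnf :: "dB \<Rightarrow> bool" where
  "is_hnf N \<longleftrightarrow> (\<exists>m i Qs. N = (Abs ^^ m) (foldl App (Var i) Qs))"

definition head_normalizable :: "dB \<Rightarrow> bool" where
  "head_normalizable M \<longleftrightarrow> (\<exists>N. beta\<^sup>*\<^sup>* M N \<and> is_hnf N)"

text \<open>All free (loose) de Bruijn indices of the term are below \<open>k\<close>,
  i.e. \<open>FV(M) \<subseteq> x1..xk\<close> for a list of k distinct variables.\<close>
fun closedn :: "nat \<Rightarrow> dB \<Rightarrow> bool" where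
  "closedn k (Var i) = (i < k)"
| "closedn k (App s t) = (closedn k s \<and> closedn k t)"
| "closedn k (Abs s) = closedn (Suc k) s"

section \<open>The small category A and the class C\<close>

record ('o, 'm) cat =
  cat_hom :: "'o \<Rightarrow> 'o \<Rightarrow> 'm set"
  cat_id :: "'o \<Rightarrow> 'm"
  cat_comp :: "'m \<Rightarrow> 'm \<Rightarrow> 'm"   \<comment> \<open>\<open>cat_comp g f = g \<circ> f\<close>\<close>

definition is_category :: "('o, 'm) cat \<Rightarrow> bool" where
  "is_category A \<longleftrightarrow>
     (\<forall>x. cat_id A x \<in> cat_hom A x x) \<and>
     (\<forall>x y z f g. f \<in> cat_hom A x y \<longrightarrow> g \<in> cat_hom A y z \<longrightarrow> cat_comp A g f \<in> cat_hom A x z) \<and>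
     (\<forall>x y f. f \<in> cat_hom A x y \<longrightarrow> cat_comp A f (cat_id A x) = f \<and> cat_comp A (cat_id A y) f = f) \<and>
     (\<forall>w x y z f g h. f \<in> cat_hom A w x \<longrightarrow> g \<in> cat_hom A x y \<longrightarrow> h \<in> cat_hom A y z \<longrightarrow>
        cat_comp A h (cat_comp A g f) = cat_comp A (cat_comp A h g) f)"

text \<open>The class \<open>\<C>\<close>; a map \<open>\<alpha> : [m] \<rightarrow> [n]\<close> is the list \<open>[\<alpha>(1)-1,...,\<alpha>(m)-1]\<close>
  (0-based, entries < n).\<close>
datatype fclass = CBij | CInj | CSurj | CAll

definition inclass :: "fclass \<Rightarrow> nat \<Rightarrow> nat list \<Rightarrow> bool" where
  "inclass c n \<alpha> = (set \<alpha> \<subseteq> {..<n} \<and>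
     (case c of CBij \<Rightarrow> distinct \<alpha> \<and> set \<alpha> = {..<n}
              | CInj \<Rightarrow> distinct \<alpha>
              | CSurj \<Rightarrow> set \<alpha> = {..<n}
              | CAll \<Rightarrow> True))"

section \<open>The category D = D_A and SD\<close>

datatype 'o dob = Atm 'o | Arr "'o dob list" "'o dob"

text \<open>\<open>MArr \<alpha> fs f\<close> is the morphism \<open>\<langle>\<alpha>,fs\<rangle> \<Rightarrow> f\<close>.\<close>
datatype 'm dmor = MAt 'm | MArr "nat list" "'m dmor list" "'m dmor"

type_synonym 'm smor = "nat list \<times> 'm dmor list"
type_synonym 'o ctx = "'o dob list list"
type_synonym 'm cmor = "'m smor list"

text \<open>For arrow objects,
  \<open>\<langle>\<alpha>,fs\<rangle> \<Rightarrow> f : (as \<Rightarrow> a) \<rightarrow> (bs \<Rightarrow> b)\<close> with \<open>\<langle>\<alpha>,fs\<rangle> : bs \<rightarrow> as\<close> in SD.\<close>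
inductive dhom :: "('o, 'm) cat \<Rightarrow> fclass \<Rightarrow> 'o dob \<Rightarrow> 'o dob \<Rightarrow> 'm dmor \<Rightarrow> bool"
  for A C where
  dhom_at: "m \<in> cat_hom A x y \<Longrightarrow> dhom A C (Atm x) (Atm y) (MAt m)"
| dhom_arr: "length \<alpha> = length as \<Longrightarrow> length fs = length as \<Longrightarrow> inclass C (length bs) \<alpha> \<Longrightarrow>
     (\<forall>i<length as. dhom A C (bs ! (\<alpha> ! i)) (as ! i) (fs ! i)) \<Longrightarrow>
     dhom A C a b f \<Longrightarrow> dhom A C (Arr as a) (Arr bs b) (MArr \<alpha> fs f)"

text \<open>Morphisms of SD: \<open>\<langle>\<alpha>,fs\<rangle> : xs \<rightarrow> ys\<close>, \<open>\<alpha> : [|ys|] \<rightarrow> [|xs|]\<close>, \<open>fs_i : xs_{\<alpha> i} \<rightarrow> ys_i\<close>.\<close>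
definition shom :: "('o, 'm) cat \<Rightarrow> fclass \<Rightarrow> 'o dob list \<Rightarrow> 'o dob list \<Rightarrow> 'm smor \<Rightarrow> bool" where
  "shom A C xs ys m \<longleftrightarrow> length (fst m) = length ys \<and> length (snd m) = length ys \<and>
     inclass C (length xs) (fst m) \<and>
     (\<forall>i<length ys. dhom A C (xs ! (fst m ! i)) (ys ! i) (snd m ! i))"

definition ctxhom :: "('o, 'm) cat \<Rightarrow> fclass \<Rightarrow> nat \<Rightarrow> 'o ctx \<Rightarrow> 'o ctx \<Rightarrow> 'm cmor \<Rightarrow> bool" where
  "ctxhom A C n \<Delta> \<Gamma> h \<longleftrightarrow> length \<Delta> = n \<and> length \<Gamma> = n \<and> length h = n \<and>
     (\<forall>l<n. shom A C (\<Delta> ! l) (\<Gamma> ! l) (h ! l))"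

fun did :: "('o, 'm) cat \<Rightarrow> 'o dob \<Rightarrow> 'm dmor" where
  "did A (Atm x) = MAt (cat_id A x)"
| "did A (Arr as a) = MArr [0..<length as] (map (did A) as) (did A a)"

definition sid :: "('o, 'm) cat \<Rightarrow> 'o dob list \<Rightarrow> 'm smor" where
  "sid A xs = ([0..<length xs], map (did A) xs)"

text \<open>Composition in D: \<open>dcomp A g f = g \<circ> f\<close>.\<close>
function dcomp :: "('o, 'm) cat \<Rightarrow> 'm dmor \<Rightarrow> 'm dmor \<Rightarrow> 'm dmor" where
  "dcomp A (MAt g) (MAt f) = MAt (cat_comp A g f)"
| "dcomp A (MArr \<beta> gs g) (MArr \<alpha> fs f) =
     MArr (map (\<lambda>j. \<beta> ! j) \<alpha>)
       (map (\<lambda>i. if i < length fs \<and> \<alpha> ! i < length gs then dcomp A (fs ! i) (gs ! (\<alpha> ! i)) else undefined)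
          [0..<length \<alpha>])
       (dcomp A g f)"
| "dcomp A (MAt g) (MArr \<alpha> fs f) = undefined"
| "dcomp A (MArr \<beta> gs g) (MAt f) = undefined"
  by pat_completeness auto
termination
proof (relation "measure (\<lambda>(A, g, f). size g + size f)")
  show "wf (measure (\<lambda>(A, g, f). size g + size f))" by simp
next
  fix A :: "('o,'m) cat" and \<beta> \<alpha> :: "nat list" and gs fs :: "'m dmor list" and g f :: "'m dmor" and i :: nat
  assume "i \<in> set [0..<length \<alpha>]" "i < length fs \<and> \<alpha> ! i < length gs"
  then have "size (fs ! i) < Suc (size_list size fs + size f)"
     "size (gs ! (\<alpha> ! i)) < Suc (size_list size gs + size g)"
    by (auto intro!: le_imp_less_Suc trans_le_add1 size_list_estimation' nth_mem)
  then show "((A, fs ! i, gs ! (\<alpha> ! i)), A, MArr \<beta> gs g, MArr \<alpha> fs f)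
      \<in> measure (\<lambda>(A, g, f). size g + size f)" by simp
qed auto

text \<open>Composition in SD, diagrammatic: \<open>\<langle>\<alpha>,f\<rangle>\<close> then \<open>\<langle>\<beta>,g\<rangle>\<close> is \<open>\<langle>\<alpha>\<circ>\<beta>, (g_i \<circ> f_{\<beta> i})_i\<rangle>\<close>.\<close>
definition scomp :: "('o, 'm) cat \<Rightarrow> 'm smor \<Rightarrow> 'm smor \<Rightarrow> 'm smor" where
  "scomp A m1 m2 = (map (\<lambda>j. fst m1 ! j) (fst m2),
      map (\<lambda>i. dcomp A (snd m2 ! i) (snd m1 ! (fst m2 ! i))) [0..<length (fst m2)])"

definition ccomp :: "('o, 'm) cat \<Rightarrow> 'm cmor \<Rightarrow> 'm cmor \<Rightarrow> 'm cmor" where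
  "ccomp A g h = map2 (scomp A) g h"

text \<open>Tensor (concatenation) of SD-morphisms, given the lengths of their sources.\<close>
definition stens :: "nat list \<Rightarrow> 'm smor list \<Rightarrow> 'm smor" where
  "stens lens ms = (concat (map (\<lambda>i. map (\<lambda>j. j + sum_list (take i lens)) (fst (ms ! i))) [0..<length ms]),
                    concat (map snd ms))"

definition ctens :: "nat \<Rightarrow> 'o ctx list \<Rightarrow> 'o ctx" where
  "ctens n Gs = map (\<lambda>l. concat (map (\<lambda>G. G ! l) Gs)) [0..<n]"

definition ctens_mor :: "nat \<Rightarrow> 'o ctx list \<Rightarrow> 'm cmor list \<Rightarrow> 'm cmor" where
  "ctens_mor n Gs gs = map (\<lambda>l. stens (map (\<lambda>G. length (G ! l)) Gs) (map (\<lambda>g. g ! l) gs)) [0..<n]"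

text \<open>\<open>\<langle>\<langle>\<rangle>,...,\<langle>a\<rangle>,...,\<langle>\<rangle>\<rangle>\<close> with \<open>\<langle>a\<rangle>\<close> at (0-based) position p, and its action on morphisms.\<close>
definition iota :: "nat \<Rightarrow> nat \<Rightarrow> 'o dob \<Rightarrow> 'o ctx" where
  "iota n p a = map (\<lambda>l. if l = p then [a] else []) [0..<n]"

definition iota_mor :: "nat \<Rightarrow> nat \<Rightarrow> 'm dmor \<Rightarrow> 'm cmor" where
  "iota_mor n p f = map (\<lambda>l. if l = p then ([0], [f]) else ([], [])) [0..<n]"

text \<open>The structural morphism \<open>\<Gamma>_0 \<otimes> \<Gamma>_1 \<otimes> ... \<otimes> \<Gamma>_k \<rightarrow> \<Gamma>_0 \<otimes> \<Gamma>_{\<alpha>(1)} \<otimes> ... \<otimes> \<Gamma>_{\<alpha>(m)}\<close>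
  of \<open>(SD)^n\<close> induced by \<open>\<alpha> : [m] \<rightarrow> [k]\<close>.\<close>
definition sigma :: "('o, 'm) cat \<Rightarrow> nat \<Rightarrow> 'o ctx list \<Rightarrow> nat list \<Rightarrow> 'm cmor" where
  "sigma A n Gs \<alpha> = map (\<lambda>l. let Ls = map (\<lambda>G. G ! l) Gs; bs = 0 # map Suc \<alpha> in
       (concat (map (\<lambda>b. map (\<lambda>t. sum_list (map length (take b Ls)) + t) [0..<length (Ls ! b)]) bs),
        map (did A) (concat (map (\<lambda>b. Ls ! b) bs)))) [0..<n]"

section \<open>The denotation\<close>

text \<open>Representatives of elements of the denotation (before taking the coend quotients).
  \<open>RApp as Gs p qs h\<close> stands for the element \<open>(p, q_1..q_k, h)\<close> of the integrand at
  \<open>\<vec>a = as\<close>, \<open>\<Gamma>_0..\<Gamma>_k = Gs\<close>.\<close>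
datatype ('o, 'm) raw =
    RVar "'m cmor"
  | RApp "'o dob list" "'o ctx list" "('o, 'm) raw" "('o, 'm) raw list" "'m cmor"

text \<open>Functorial action in the context (contravariant): along \<open>g : \<Delta>' \<rightarrow> \<Delta>\<close>,
  maps \<open>[[M]](\<Delta>,a)\<close> to \<open>[[M]](\<Delta>',a)\<close>.\<close>
fun act_ctx :: "('o, 'm) cat \<Rightarrow> dB \<Rightarrow> 'o dob \<Rightarrow> 'm cmor \<Rightarrow> ('o, 'm) raw \<Rightarrow> ('o, 'm) raw" where
  "act_ctx A (Var k) a g x = (case x of RVar h \<Rightarrow> RVar (ccomp A g h) | _ \<Rightarrow> x)"
| "act_ctx A (Abs P) a g x = (case a of Arr as b \<Rightarrow> act_ctx A P b (g @ [sid A as]) x | Atm _ \<Rightarrow> x)"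
| "act_ctx A (App P Q) a g x =
     (case x of RApp bs Gs p qs h \<Rightarrow> RApp bs Gs p qs (ccomp A g h) | _ \<Rightarrow> x)"

text \<open>Functorial action in the type (covariant): along \<open>f : a \<rightarrow> b\<close> in D,
  maps \<open>[[M]](\<Delta>,a)\<close> to \<open>[[M]](\<Delta>,b)\<close>.\<close>
fun act_ty :: "('o, 'm) cat \<Rightarrow> dB \<Rightarrow> nat \<Rightarrow> 'o ctx \<Rightarrow> 'o dob \<Rightarrow> 'o dob \<Rightarrow> 'm dmor
                 \<Rightarrow> ('o, 'm) raw \<Rightarrow> ('o, 'm) raw" where
  "act_ty A (Var k) n \<Delta> a b f x =
     (case x of RVar h \<Rightarrow> RVar (ccomp A h (iota_mor n (n - Suc k) f)) | _ \<Rightarrow> x)"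
| "act_ty A (Abs P) n \<Delta> a b f x =
     (case (a, b, f) of
        (Arr as a1, Arr bs b1, MArr \<alpha> fs f1) \<Rightarrow>
           act_ty A P (Suc n) (\<Delta> @ [bs]) a1 b1 f1 (act_ctx A P a1 (map (sid A) \<Delta> @ [(\<alpha>, fs)]) x)
      | _ \<Rightarrow> x)"
| "act_ty A (App P Q) n \<Delta> a b f x =
     (case x of RApp bs Gs p qs h \<Rightarrow>
        RApp bs Gs (act_ty A P n (Gs ! 0) (Arr bs a) (Arr bs b) (MArr [0..<length bs] (map (did A) bs) f) p) qs h
      | _ \<Rightarrow> x)"

text \<open>Representatives of \<open>[[M]]_{x1..xn}(\<Delta>,a)\<close>. Variable with de Bruijn index k is
  \<open>x_{n-k}\<close> (the innermost binder is appended last to the list of variables).\<close>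
fun raw_den :: "('o, 'm) cat \<Rightarrow> fclass \<Rightarrow> dB \<Rightarrow> nat \<Rightarrow> 'o ctx \<Rightarrow> 'o dob \<Rightarrow> ('o, 'm) raw set" where
  "raw_den A C (Var k) n \<Delta> a =
     (if k < n then {RVar h | h. ctxhom A C n \<Delta> (iota n (n - Suc k) a) h} else {})"
| "raw_den A C (Abs P) n \<Delta> a =
     (case a of Atm _ \<Rightarrow> {} | Arr as b \<Rightarrow> raw_den A C P (Suc n) (\<Delta> @ [as]) b)"
| "raw_den A C (App P Q) n \<Delta> a =
     {RApp as Gs p qs h | as Gs p qs h.
        length Gs = Suc (length as) \<and> (\<forall>G\<in>set Gs. length G = n) \<and>
        p \<in> raw_den A C P n (Gs ! 0) (Arr as a) \<and>
        length qs = length as \<and> (\<forall>i<length as. qs ! i \<in> raw_den A C Q n (Gs ! Suc i) (as ! i)) \<and>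
        ctxhom A C n \<Delta> (ctens n Gs) h}"

text \<open>The equivalence on representatives whose quotient is the denotation. For an
  application it is generated by: equivalence of the components, and the dinaturality
  identifications of the coends over \<open>\<Gamma>_0..\<Gamma>_k \<in> (SD)^n\<close> and over \<open>\<vec>a \<in> SD\<close>.\<close>
fun eqv :: "('o, 'm) cat \<Rightarrow> fclass \<Rightarrow> dB \<Rightarrow> nat \<Rightarrow> 'o ctx \<Rightarrow> 'o dob
              \<Rightarrow> ('o, 'm) raw \<Rightarrow> ('o, 'm) raw \<Rightarrow> bool" where
  "eqv A C (Var k) n \<Delta> a = (\<lambda>x y. x = y)"
| "eqv A C (Abs P) n \<Delta> a =
     (case a of Atm _ \<Rightarrow> (\<lambda>x y. False) | Arr as b \<Rightarrow> eqv A C P (Suc n) (\<Delta> @ [as]) b)"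
| "eqv A C (App P Q) n \<Delta> a = equivclp (\<lambda>x y.
     x \<in> raw_den A C (App P Q) n \<Delta> a \<and> y \<in> raw_den A C (App P Q) n \<Delta> a \<and>
     ((\<exists>as Gs p p' qs qs' h. x = RApp as Gs p qs h \<and> y = RApp as Gs p' qs' h \<and>
          eqv A C P n (Gs ! 0) (Arr as a) p p' \<and> length qs = length qs' \<and>
          (\<forall>i<length qs. eqv A C Q n (Gs ! Suc i) (as ! i) (qs ! i) (qs' ! i)))
      \<or> (\<exists>as Gs Gs' gs p' qs' h. length Gs = Suc (length as) \<and> length Gs' = length Gs \<and>
          length gs = length Gs \<and> (\<forall>i<length Gs. ctxhom A C n (Gs ! i) (Gs' ! i) (gs ! i)) \<and>
          x = RApp as Gs (act_ctx A P (Arr as a) (gs ! 0) p')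
                (map (\<lambda>i. act_ctx A Q (as ! i) (gs ! Suc i) (qs' ! i)) [0..<length as]) h \<and>
          y = RApp as Gs' p' qs' (ccomp A h (ctens_mor n Gs gs)))
      \<or> (\<exists>as bs \<alpha> fs Gs p qs h. length Gs = Suc (length as) \<and> shom A C as bs (\<alpha>, fs) \<and>
          x = RApp as Gs (act_ty A P n (Gs ! 0) (Arr bs a) (Arr as a) (MArr \<alpha> fs (did A a)) p) qs h \<and>
          y = RApp bs (Gs ! 0 # map (\<lambda>j. Gs ! Suc (\<alpha> ! j)) [0..<length bs]) p
                (map (\<lambda>j. act_ty A Q n (Gs ! Suc (\<alpha> ! j)) (as ! (\<alpha> ! j)) (bs ! j) (fs ! j) (qs ! (\<alpha> ! j)))
                   [0..<length bs])
                (ccomp A h (sigma A n Gs \<alpha>)))))"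

definition den :: "('o, 'm) cat \<Rightarrow> fclass \<Rightarrow> dB \<Rightarrow> nat \<Rightarrow> 'o ctx \<Rightarrow> 'o dob \<Rightarrow> ('o, 'm) raw set set" where
  "den A C M n \<Delta> a = raw_den A C M n \<Delta> a //
      {(x, y). x \<in> raw_den A C M n \<Delta> a \<and> y \<in> raw_den A C M n \<Delta> a \<and> eqv A C M n \<Delta> a x y}"

end

(* Types are the objects of D, read as non-idempotent intersection types: a variable may be
   used at a finite multiset of types (the list as of an arrow as => b), and contexts are
   added at applications. Every head normal form \<lambda>y1..ym. y Q1..Qp is typable, with y at
   <> => ... => <> => o, so that the arguments Qi need no type at all. Typability is preserved
   by beta-expansion, since a derivation for M[N/x] splits into one for M and one derivation
   of N for each type at which x is used in it. Finally, by induction on the derivation,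
   G |- M : a yields an element of the integrand of [[M]](\<Delta>, a) whenever the components of
   \<Delta> list the multisets of G: the context morphisms needed are permutations, and every
   class C contains the bijections. *)

theory Submission
  imports
    Defs
    "HOL-Library.Function_Algebras"
    "HOL-Library.Multiset"
    "HOL-Combinatorics.Permutations"
begin

lemma sum_list_apply: "sum_list fs x = (\<Sum>f\<leftarrow>fs. f x)"
  by (induct fs) simp_all

lemma sum_list_eq_empty_mset_iff: "sum_list Ms = {#} \<longleftrightarrow> (\<forall>M\<in>set Ms. M = {#})"
  by (induct Ms) simp_all

lemma sum_list_concat: "sum_list (concat xss) = (\<Sum>xs\<leftarrow>xss. sum_list xs)"
  by (induct xss) simp_all

lemma case_nat_0_comp_Suc: "case_nat (f 0) (f \<circ> Suc) = f"
  by (simp add: fun_eq_iff split: nat.split)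

section \<open>Non-idempotent intersection types\<close>

text \<open>\<open>G k\<close> is the multiset of types at which the variable with de Bruijn index \<open>k\<close> is used.\<close>
type_synonym 'o tctx = "nat \<Rightarrow> 'o dob multiset"

definition tctx_drop :: "nat \<Rightarrow> 'o tctx \<Rightarrow> 'o tctx" where
  "tctx_drop k G = (\<lambda>j. if j < k then G j else G (Suc j))"

inductive itype :: "'o tctx \<Rightarrow> dB \<Rightarrow> 'o dob \<Rightarrow> bool" where
  itype_Var: "itype (0(k := {#a#})) (Var k) a"
| itype_Abs: "itype (case_nat (mset as) G) P b \<Longrightarrow> itype G (Abs P) (Arr as b)"
| itype_App: "itype G P (Arr (map snd qs) a) \<Longrightarrow> \<forall>(H, b)\<in>set qs. itype H Q b \<Longrightarrow>
    itype (G + sum_list (map fst qs)) (App P Q) a"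

inductive_cases itype_VarE: "itype G (Var k) a"
inductive_cases itype_AbsE: "itype G (Abs P) a"
inductive_cases itype_AppE: "itype G (App P Q) a"

lemma tctx_drop_add [simp]: "tctx_drop k (G + H) = tctx_drop k G + tctx_drop k H"
  by (auto simp: tctx_drop_def)

lemma tctx_drop_sum_list [simp]: "tctx_drop k (sum_list Gs) = (\<Sum>G\<leftarrow>Gs. tctx_drop k G)"
  by (simp add: fun_eq_iff tctx_drop_def sum_list_apply o_def)

lemma tctx_drop_0: "tctx_drop 0 G = G \<circ> Suc"
  by (auto simp: tctx_drop_def)

section \<open>Subject expansion\<close>

lemma itype_db_lift:
  "itype G (db_lift M k) a \<Longrightarrow> G k = {#} \<and> itype (tctx_drop k G) M a"
proof (induct M arbitrary: G k a)
  case (Var i)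
  then have G: "G = 0((if i < k then i else Suc i) := {#a#})"
    by (auto elim: itype_VarE split: if_splits)
  then have "G k = {#}"
    by simp
  moreover have "tctx_drop k G = 0(i := {#a#})"
    using G by (auto simp: tctx_drop_def)
  ultimately show ?case
    by (simp only: itype_Var)
next
  case (App s t)
  then obtain G0 qs where G: "G = G0 + sum_list (map fst qs)"
    and s: "itype G0 (db_lift s k) (Arr (map snd qs) a)"
    and t: "\<forall>(H, b)\<in>set qs. itype H (db_lift t k) b"
    by (auto elim: itype_AppE)
  have s': "G0 k = {#}" "itype (tctx_drop k G0) s (Arr (map snd qs) a)"
    using App.hyps(1)[OF s] by auto
  have t': "\<forall>(H, b)\<in>set qs. H k = {#} \<and> itype (tctx_drop k H) t b"
    using App.hyps(2) t by blast
  have "\<forall>H\<in>set (map fst qs). H k = {#}"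
    using t' by auto
  then have "G k = {#}"
    using s'(1) by (simp add: G sum_list_apply sum_list_eq_empty_mset_iff)
  moreover define qs' where "qs' = map (apfst (tctx_drop k)) qs"
  have "itype (tctx_drop k G0 + sum_list (map fst qs')) (App s t) a"
  proof (rule itype_App)
    show "itype (tctx_drop k G0) s (Arr (map snd qs') a)"
      using s'(2) by (simp add: qs'_def)
    show "\<forall>(H, b)\<in>set qs'. itype H t b"
      using t' by (auto simp: qs'_def)
  qed
  moreover have "tctx_drop k G = tctx_drop k G0 + sum_list (map fst qs')"
    by (simp add: G qs'_def o_def)
  ultimately show ?case
    by metis
next
  case (Abs s)
  then obtain as b where a: "a = Arr as b"
    and s: "itype (case_nat (mset as) G) (db_lift s (Suc k)) b"
    by (auto elim: itype_AbsE)
  have "tctx_drop (Suc k) (case_nat (mset as) G) = case_nat (mset as) (tctx_drop k G)"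
    by (auto simp: tctx_drop_def split: nat.split)
  then show ?case
    using Abs.hyps[OF s] a by (auto intro: itype_Abs)
qed

definition subst_split ::
  "dB \<Rightarrow> dB \<Rightarrow> nat \<Rightarrow> 'o tctx \<Rightarrow> 'o dob \<Rightarrow> 'o tctx \<times> ('o tctx \<times> 'o dob) list \<Rightarrow> bool" where
  "subst_split M N k G a = (\<lambda>(G', ps). itype G' M a \<and> G' k = mset (map snd ps) \<and>
     (\<forall>(H, b)\<in>set ps. itype H N b) \<and> G = tctx_drop k G' + sum_list (map fst ps))"

lemma subst_split_App:
  assumes s: "subst_split s N k G0 (Arr (map snd qs) a) (G0', ps0)"
    and t: "\<forall>q\<in>set qs. subst_split t N k (fst q) (snd q) (f q)"
  defines "G' \<equiv> G0' + (\<Sum>q\<leftarrow>qs. fst (f q))" and "ps \<equiv> ps0 @ concat (map (snd \<circ> f) qs)"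
  shows "subst_split (App s t) N k (G0 + sum_list (map fst qs)) a (G', ps)"
  unfolding subst_split_def prod.case
proof (intro conjI)
  have t': "\<forall>q\<in>set qs. itype (fst (f q)) t (snd q) \<and> fst (f q) k = mset (map snd (snd (f q))) \<and>
     (\<forall>(H, b)\<in>set (snd (f q)). itype H N b) \<and>
     fst q = tctx_drop k (fst (f q)) + sum_list (map fst (snd (f q)))"
    using t by (simp add: subst_split_def case_prod_beta)
  have "itype (G0' + sum_list (map fst (map (\<lambda>q. (fst (f q), snd q)) qs))) (App s t) a"
    using s t' by (intro itype_App) (auto simp: subst_split_def o_def)
  then show "itype G' (App s t) a"
    by (simp add: G'_def o_def)
  show "G' k = mset (map snd ps)"
    using s t' by (simp add: subst_split_def G'_def ps_def sum_list_apply map_concat mset_concat o_def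
        cong: map_cong)
  show "\<forall>(H, b)\<in>set ps. itype H N b"
    using s t' by (auto simp: subst_split_def ps_def)
  have "sum_list (map fst qs) =
      (\<Sum>q\<leftarrow>qs. tctx_drop k (fst (f q)) + sum_list (map fst (snd (f q))))"
    using t' by (intro arg_cong[where f = sum_list] map_cong) auto
  then show "G0 + sum_list (map fst qs) = tctx_drop k G' + sum_list (map fst ps)"
    using s by (simp add: subst_split_def G'_def ps_def sum_list_addf map_concat sum_list_concat o_def add_ac)
qed

lemma itype_db_subst: "itype G (db_subst M N k) a \<Longrightarrow> \<exists>G' ps. subst_split M N k G a (G', ps)"
proof (induct M arbitrary: G N k a)
  case (Var i)
  consider "k < i" | "i = k" | "i < k"
    by linarith
  then show ?case
  proof cases
    case 1
    with Var have "G = 0(i - 1 := {#a#})"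
      by (auto elim: itype_VarE)
    with 1 have "subst_split (Var i) N k G a (0(i := {#a#}), [])"
      by (auto simp: subst_split_def tctx_drop_def fun_eq_iff intro: itype_Var)
    then show ?thesis
      by blast
  next
    case 2
    with Var have "itype G N a"
      by simp
    with 2 have "subst_split (Var i) N k G a (0(i := {#a#}), [(G, a)])"
      by (auto simp: subst_split_def tctx_drop_def fun_eq_iff intro: itype_Var)
    then show ?thesis
      by blast
  next
    case 3
    with Var have "G = 0(i := {#a#})"
      by (auto elim: itype_VarE)
    with 3 have "subst_split (Var i) N k G a (0(i := {#a#}), [])"
      by (auto simp: subst_split_def tctx_drop_def fun_eq_iff intro: itype_Var)
    then show ?thesis
      by blast
  qed
next
  case (App s t)
  then obtain G0 qs where G: "G = G0 + sum_list (map fst qs)"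
    and s: "itype G0 (db_subst s N k) (Arr (map snd qs) a)"
    and t: "\<forall>(H, b)\<in>set qs. itype H (db_subst t N k) b"
    by (auto elim: itype_AppE)
  obtain G0' ps0 where s': "subst_split s N k G0 (Arr (map snd qs) a) (G0', ps0)"
    using App.hyps(1)[OF s] by blast
  have "\<forall>q\<in>set qs. \<exists>S. subst_split t N k (fst q) (snd q) S"
    using App.hyps(2) t by fastforce
  then obtain f where "\<forall>q\<in>set qs. subst_split t N k (fst q) (snd q) (f q)"
    by (rule bchoice[elim_format]) blast
  then show ?case
    unfolding G by (blast intro: subst_split_App[OF s'])
next
  case (Abs s)
  then obtain bs b where a: "a = Arr bs b"
    and s: "itype (case_nat (mset bs) G) (db_subst s (db_lift N 0) (Suc k)) b"
    by (auto elim: itype_AbsE)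
  then obtain G' ps where s': "itype G' s b" "G' (Suc k) = mset (map snd ps)"
    "\<forall>(H, c)\<in>set ps. itype H (db_lift N 0) c"
    "case_nat (mset bs) G = tctx_drop (Suc k) G' + sum_list (map fst ps)"
    using Abs.hyps unfolding subst_split_def by blast
  have N: "H 0 = {#} \<and> itype (H \<circ> Suc) N c" if "(H, c) \<in> set ps" for H c
    using itype_db_lift[of H N 0 c] s'(3) that by (auto simp: tctx_drop_0)
  then have "sum_list (map fst ps) 0 = {#}"
    by (auto simp: sum_list_apply sum_list_eq_empty_mset_iff)
  then have "G' 0 = mset bs"
    using fun_cong[OF s'(4), of 0] by (simp add: tctx_drop_def)
  then have "case_nat (mset bs) (G' \<circ> Suc) = G'"
    using case_nat_0_comp_Suc[of G'] by simp
  then have "itype (G' \<circ> Suc) (Abs s) (Arr bs b)"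
    using itype_Abs s'(1) by metis
  moreover have "G = tctx_drop k (G' \<circ> Suc) + sum_list (map fst (map (apfst (\<lambda>H. H \<circ> Suc)) ps))"
  proof (rule ext)
    fix j
    show "G j = (tctx_drop k (G' \<circ> Suc) + sum_list (map fst (map (apfst (\<lambda>H. H \<circ> Suc)) ps))) j"
      using fun_cong[OF s'(4), of "Suc j"] by (simp add: tctx_drop_def sum_list_apply o_def)
  qed
  ultimately have "subst_split (Abs s) N k G a (G' \<circ> Suc, map (apfst (\<lambda>H. H \<circ> Suc)) ps)"
    using s'(2) N a by (auto simp: subst_split_def multiset.map_comp)
  then show ?case
    by blast
qed

lemma itype_beta_expand: "beta M N \<Longrightarrow> itype G N a \<Longrightarrow> itype G M a"
proof (induct arbitrary: G a rule: beta.induct)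
  case (beta_redex s t)
  then obtain G' ps where "subst_split s t 0 G a (G', ps)"
    using itype_db_subst by blast
  then have s: "itype G' s a" "G' 0 = mset (map snd ps)"
    and t: "\<forall>(H, b)\<in>set ps. itype H t b" and G: "G = (G' \<circ> Suc) + sum_list (map fst ps)"
    by (simp_all add: subst_split_def tctx_drop_0)
  have "case_nat (mset (map snd ps)) (G' \<circ> Suc) = G'"
    using case_nat_0_comp_Suc[of G'] s(2) by simp
  then have "itype (G' \<circ> Suc) (Abs s) (Arr (map snd ps) a)"
    using itype_Abs s(1) by metis
  then show ?case
    using itype_App t G by metis
next
  case (beta_appL s t u)
  then obtain G0 qs where G: "G = G0 + sum_list (map fst qs)"
    and "itype G0 t (Arr (map snd qs) a)" "\<forall>(H, b)\<in>set qs. itype H u b"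
    by (auto elim: itype_AppE)
  then show ?case
    unfolding G using beta_appL.hyps(2) by (blast intro: itype_App)
next
  case (beta_appR s t u)
  then obtain G0 qs where G: "G = G0 + sum_list (map fst qs)"
    and "itype G0 u (Arr (map snd qs) a)" "\<forall>(H, b)\<in>set qs. itype H t b"
    by (auto elim: itype_AppE)
  then show ?case
    unfolding G using beta_appR.hyps(2) by (blast intro: itype_App)
next
  case (beta_abs s t)
  then show ?case
    by (auto elim!: itype_AbsE intro: itype_Abs)
qed

lemma itype_rtranclp_beta_expand: "beta\<^sup>*\<^sup>* M N \<Longrightarrow> itype G N a \<Longrightarrow> itype G M a"
  by (induct rule: converse_rtranclp_induct) (auto intro: itype_beta_expand)

section \<open>Head normal forms are typable\<close>

lemma closedn_db_lift: "closedn k s \<Longrightarrow> closedn (Suc k) (db_lift s j)"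
  by (induct s arbitrary: k j) auto

lemma closedn_db_subst:
  "closedn (Suc k) t \<Longrightarrow> closedn k s \<Longrightarrow> j \<le> k \<Longrightarrow> closedn k (db_subst t s j)"
  by (induct t arbitrary: k s j) (auto simp: closedn_db_lift)

lemma closedn_beta: "beta M N \<Longrightarrow> closedn k M \<Longrightarrow> closedn k N"
  by (induct arbitrary: k rule: beta.induct) (auto simp: closedn_db_subst)

lemma closedn_rtranclp_beta: "beta\<^sup>*\<^sup>* M N \<Longrightarrow> closedn k M \<Longrightarrow> closedn k N"
  by (induct rule: rtranclp_induct) (auto intro: closedn_beta)

lemma closedn_Abs_funpow [simp]: "closedn k ((Abs ^^ m) P) = closedn (k + m) P"
  by (induct m arbitrary: k) auto

lemma closedn_foldl_App [simp]:
  "closedn k (foldl App P Qs) \<longleftrightarrow> closedn k P \<and> (\<forall>Q\<in>set Qs. closedn k Q)"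
  by (induct Qs arbitrary: P) auto

lemma itype_foldl_App: "itype G P ((Arr [] ^^ length Qs) b) \<Longrightarrow> itype G (foldl App P Qs) b"
proof (induct Qs arbitrary: P)
  case (Cons Q Qs)
  have "itype G (App P Q) ((Arr [] ^^ length Qs) b)"
    using itype_App[of G P "[]" _ Q] Cons.prems by simp
  then show ?case
    using Cons.hyps by simp
qed simp

lemma itype_Abs_funpow: "itype G P b \<Longrightarrow> \<exists>b'. itype (\<lambda>j. G (j + m)) ((Abs ^^ m) P) b'"
proof (induct m)
  case (Suc m)
  then obtain b' where "itype (\<lambda>j. G (j + m)) ((Abs ^^ m) P) b'"
    by blast
  moreover obtain as where "mset as = G m"
    using ex_mset by blast
  moreover have "case_nat (G m) (\<lambda>j. G (j + Suc m)) = (\<lambda>j. G (j + m))"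
    by (simp add: fun_eq_iff split: nat.split)
  ultimately have "itype (\<lambda>j. G (j + Suc m)) (Abs ((Abs ^^ m) P)) (Arr as b')"
    by (metis itype_Abs)
  then show ?case
    by auto
qed auto

lemma itype_hnf:
  assumes "is_hnf N" and "closedn n N"
  shows "\<exists>(G :: 'o tctx) a. itype G N a \<and> (\<forall>j\<ge>n. G j = {#})"
proof -
  obtain m i Qs where N: "N = (Abs ^^ m) (foldl App (Var i) Qs)"
    using assms(1) unfolding is_hnf_def by blast
  then have "i < n + m"
    using assms(2) by simp
  define c :: "'o dob" where "c = (Arr [] ^^ length Qs) (Atm undefined)"
  have "itype (0(i := {#c#})) (foldl App (Var i) Qs) (Atm undefined)"
    by (rule itype_foldl_App) (simp add: c_def[symmetric] itype_Var)
  moreover define G where "G = (\<lambda>j. (0(i := {#c#})) (j + m))"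
  ultimately obtain b where "itype G N b"
    using itype_Abs_funpow N by blast
  moreover have "\<forall>j\<ge>n. G j = {#}"
    using \<open>i < n + m\<close> by (simp add: G_def)
  ultimately show ?thesis
    by blast
qed

lemma head_normalizable_itype:
  assumes "head_normalizable M" and "closedn n M"
  shows "\<exists>(G :: 'o tctx) a. itype G M a \<and> (\<forall>j\<ge>n. G j = {#})"
proof -
  obtain N where "beta\<^sup>*\<^sup>* M N" "is_hnf N"
    using assms(1) unfolding head_normalizable_def by blast
  moreover have "closedn n N"
    using closedn_rtranclp_beta assms(2) calculation(1) by blast
  ultimately show ?thesis
    using itype_hnf itype_rtranclp_beta_expand by metis
qed

section \<open>Type derivations give elements of the denotation\<close>

lemma dhom_did: "is_category A \<Longrightarrow> dhom A C a a (did A a)"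
proof (induct a)
  case (Atm x)
  then show ?case
    by (auto intro: dhom_at simp: is_category_def)
next
  case (Arr as b)
  have "inclass C (length as) [0..<length as]"
    by (cases C) (auto simp: inclass_def)
  with Arr show ?case
    by (auto intro: dhom_arr)
qed

lemma inclass_permutation:
  assumes "p permutes {..<n}"
  shows "inclass C n (map p [0..<n])"
proof -
  have "set (map p [0..<n]) = {..<n}"
    using permutes_image[OF assms] by (simp add: atLeast0LessThan)
  moreover have "distinct (map p [0..<n])"
    using permutes_inj_on[OF assms] by (simp add: distinct_map atLeast0LessThan)
  ultimately show ?thesis
    by (cases C) (auto simp: inclass_def)
qed

lemma shom_if_mset_eq:
  assumes "is_category A" and "mset xs = mset ys"
  shows "\<exists>m. shom A C xs ys m"
proof -
  obtain p where p: "p permutes {..<length xs}" "permute_list p xs = ys"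
    using assms(2) mset_eq_permutation by metis
  then have "length ys = length xs" and "\<forall>i<length ys. ys ! i = xs ! p i"
    using permute_list_nth by auto
  moreover have "inclass C (length xs) (map p [0..<length ys])"
    using inclass_permutation[OF p(1)] \<open>length ys = length xs\<close> by simp
  ultimately have "shom A C xs ys (map p [0..<length ys], map (did A) ys)"
    using dhom_did[OF assms(1)] by (simp add: shom_def)
  then show ?thesis
    by blast
qed

text \<open>Component \<open>l\<close> of \<open>\<Delta>\<close> belongs to the variable with de Bruijn index \<open>n - 1 - l\<close>,
  as in \<^const>\<open>raw_den\<close>.\<close>
definition ctx_repr :: "nat \<Rightarrow> 'o ctx \<Rightarrow> 'o tctx \<Rightarrow> bool" where
  "ctx_repr n \<Delta> G \<longleftrightarrow> length \<Delta> = n \<and> (\<forall>l<n. mset (\<Delta> ! l) = G (n - Suc l)) \<and> (\<forall>j\<ge>n. G j = {#})"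

lemma ex_ctx_repr:
  assumes "\<forall>j\<ge>n. G j = {#}"
  shows "\<exists>\<Delta>. ctx_repr n \<Delta> G"
proof -
  have "\<forall>l<n. \<exists>xs. mset xs = G (n - Suc l)"
    using ex_mset by blast
  then show ?thesis
    using assms unfolding Skolem_list_nth ctx_repr_def by blast
qed

lemma ctxhom_if_ctx_repr:
  assumes "is_category A" and "ctx_repr n \<Delta> G" and "ctx_repr n \<Gamma> G"
  shows "\<exists>h. ctxhom A C n \<Delta> \<Gamma> h"
proof -
  have "\<forall>l<n. \<exists>m. shom A C (\<Delta> ! l) (\<Gamma> ! l) m"
    using assms shom_if_mset_eq by (metis ctx_repr_def)
  then show ?thesis
    using assms(2,3) unfolding Skolem_list_nth ctxhom_def ctx_repr_def by blast
qed

lemma ctx_repr_iota: "k < n \<Longrightarrow> ctx_repr n (iota n (n - Suc k) a) (0(k := {#a#}))"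
  by (auto simp: ctx_repr_def iota_def)

lemma ctx_repr_snoc:
  assumes "ctx_repr n \<Delta> G"
  shows "ctx_repr (Suc n) (\<Delta> @ [as]) (case_nat (mset as) G)"
  unfolding ctx_repr_def
proof (intro conjI allI impI)
  fix l
  assume "l < Suc n"
  then consider "l < n" | "l = n"
    by linarith
  then show "mset ((\<Delta> @ [as]) ! l) = case_nat (mset as) G (Suc n - Suc l)"
  proof cases
    case 1
    then have "n - l = Suc (n - Suc l)"
      by simp
    with 1 show ?thesis
      using assms by (simp add: ctx_repr_def nth_append)
  qed (use assms in \<open>simp add: ctx_repr_def nth_append\<close>)
next
  fix j :: nat
  assume "j \<ge> Suc n"
  then show "case_nat (mset as) G j = {#}"
    using assms by (cases j) (simp_all add: ctx_repr_def)
qed (use assms in \<open>simp add: ctx_repr_def\<close>)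

lemma ctx_repr_ctens: "list_all2 (ctx_repr n) \<Delta>s Gs \<Longrightarrow> ctx_repr n (ctens n \<Delta>s) (sum_list Gs)"
proof (induct rule: list_all2_induct)
  case Nil
  then show ?case
    by (simp add: ctx_repr_def ctens_def)
next
  case (Cons \<Delta> \<Delta>s G Gs)
  then show ?case
    by (auto simp: ctx_repr_def ctens_def)
qed

lemma raw_den_nonempty_if_itype:
  assumes "is_category A"
  shows "itype G M a \<Longrightarrow> ctx_repr n \<Delta> G \<Longrightarrow> raw_den A C M n \<Delta> a \<noteq> {}"
proof (induct arbitrary: n \<Delta> rule: itype.induct)
  case (itype_Var k a)
  have "k < n"
  proof (rule ccontr)
    assume "\<not> k < n"
    then have "(0(k := {#a#}) :: 'a tctx) k = {#}"
      using itype_Var unfolding ctx_repr_def by (meson not_less)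
    then show False
      by simp
  qed
  moreover obtain h where "ctxhom A C n \<Delta> (iota n (n - Suc k) a) h"
    using ctxhom_if_ctx_repr[OF assms itype_Var ctx_repr_iota[OF \<open>k < n\<close>]] by blast
  ultimately show ?case
    by auto
next
  case (itype_Abs as G P b)
  have "ctx_repr (Suc n) (\<Delta> @ [as]) (case_nat (mset as) G)"
    by (rule ctx_repr_snoc[OF itype_Abs.prems])
  then have "raw_den A C P (Suc n) (\<Delta> @ [as]) b \<noteq> {}"
    by (rule itype_Abs.hyps(2))
  then show ?case
    by simp
next
  case (itype_App G P qs a Q)
  have "\<forall>j\<ge>n. (G + sum_list (map fst qs)) j = {#}"
    using itype_App.prems by (simp add: ctx_repr_def)
  then have G: "\<forall>j\<ge>n. G j = {#}" and H: "\<forall>H\<in>fst ` set qs. \<forall>j\<ge>n. H j = {#}"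
    by (auto simp: sum_list_apply sum_list_eq_empty_mset_iff)
  obtain \<Delta>0 where \<Delta>0: "ctx_repr n \<Delta>0 G"
    using ex_ctx_repr[OF G] by blast
  then obtain p where p: "p \<in> raw_den A C P n \<Delta>0 (Arr (map snd qs) a)"
    using itype_App.hyps(2) by blast
  have "\<forall>q\<in>set qs. \<exists>x. ctx_repr n (fst x) (fst q) \<and> snd x \<in> raw_den A C Q n (fst x) (snd q)"
  proof
    fix q
    assume q: "q \<in> set qs"
    then obtain \<Delta>q where "ctx_repr n \<Delta>q (fst q)"
      using ex_ctx_repr H by blast
    moreover from this obtain x where "x \<in> raw_den A C Q n \<Delta>q (snd q)"
      using itype_App.hyps(3) q by fastforce
    ultimately show "\<exists>x. ctx_repr n (fst x) (fst q) \<and> snd x \<in> raw_den A C Q n (fst x) (snd q)"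
      by (intro exI[of _ "(\<Delta>q, x)"]) simp
  qed
  then obtain f where f: "\<forall>q\<in>set qs.
      ctx_repr n (fst (f q)) (fst q) \<and> snd (f q) \<in> raw_den A C Q n (fst (f q)) (snd q)"
    by (rule bchoice[elim_format]) blast
  define \<Gamma>s where "\<Gamma>s = \<Delta>0 # map (fst \<circ> f) qs"
  have "list_all2 (ctx_repr n) \<Gamma>s (G # map fst qs)"
    using \<Delta>0 f by (simp add: \<Gamma>s_def list_all2_map1 list_all2_map2 list_all2_same)
  then have "ctx_repr n (ctens n \<Gamma>s) (G + sum_list (map fst qs))"
    using ctx_repr_ctens by fastforce
  then obtain h where h: "ctxhom A C n \<Delta> (ctens n \<Gamma>s) h"
    using ctxhom_if_ctx_repr[OF assms itype_App.prems] by blast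
  have "\<forall>\<Gamma>\<in>set \<Gamma>s. length \<Gamma> = n"
    using \<Delta>0 f by (auto simp: \<Gamma>s_def ctx_repr_def)
  then have "RApp (map snd qs) \<Gamma>s p (map (snd \<circ> f) qs) h \<in> raw_den A C (App P Q) n \<Delta> a"
    using p f h by (auto simp: \<Gamma>s_def)
  then show ?case
    by blast
qed

theorem corollary1:
  fixes A :: "('o, 'm) cat" and C :: fclass and M :: dB and n :: nat
  assumes "is_category A"
    and "closedn n M"
    and "head_normalizable M"
  shows "\<exists>\<Delta> a. length \<Delta> = n \<and> den A C M n \<Delta> a \<noteq> {}"
proof -
  obtain G :: "'o tctx" and a where "itype G M a" and support: "\<forall>j\<ge>n. G j = {#}"
    using head_normalizable_itype assms(2,3) by blast
  moreover obtain \<Delta> where \<Delta>: "ctx_repr n \<Delta> G"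
    using ex_ctx_repr[OF support] by blast
  ultimately have "raw_den A C M n \<Delta> a \<noteq> {}"
    using raw_den_nonempty_if_itype[OF assms(1)] by blast
  then have "den A C M n \<Delta> a \<noteq> {}"
    unfolding den_def quotient_def by blast
  moreover have "length \<Delta> = n"
    using \<Delta> by (simp add: ctx_repr_def)
  ultimately show ?thesis
    by blast
qed

end
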